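(* Let $A=e\int_0^1 \frac{e^{-1/x}}{x}\,dx$. Let $b_1=b_2=1$, $b_3=b_4=2$, $b_5=b_6=3$, and in general $b_{2j-1}=b_{2j}=j$ for $j\ge1$. Put $R_0=1$ and, for $N\ge1$, $$R_N=\cfrac{1}{1+\cfrac{b_1}{1+\cfrac{b_2}{\ddots\,1+\cfrac{b_{N-1}}{1+b_N}}}}.$$ Then $R_N\to A$ as $N\to\infty$, i.e. $$A=\cfrac{1}{1+\cfrac{1}{1+\cfrac{1}{1+\cfrac{2}{1+\cfrac{2}{1+\cfrac{3}{1+\cfrac{3}{1+\cdots}}}}}}},$$ and the approximants alternate about $A$: $R_N>A$ for every even $N\ge0$ and $R_N<A$ for every odd $N\ge1$ (so $R_1=\tfrac12$, $R_3=\tfrac47$, $R_5=\tfrac{20}{34},\dots$ lie below $A$ and $R_0=1$, $R_2=\tfrac23$, $R_4=\tfrac8{13},\dots$ lie above $A$).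
   Context: $e$ is the base of the natural logarithm. *)

theory Defs
  imports "HOL-Analysis.Analysis"
begin

definition A_const :: real where
  "A_const = exp 1 * integral {0..1} (\<lambda>x::real. exp (- 1 / x) / x)"

definition bseq :: "nat \<Rightarrow> real" where
  "bseq j = real ((j + 1) div 2)"

fun cf_tail :: "(nat \<Rightarrow> real) \<Rightarrow> nat \<Rightarrow> nat \<Rightarrow> real" where
  "cf_tail b k 0 = 1"
| "cf_tail b k (Suc m) = 1 + b k / cf_tail b (Suc k) m"

definition R :: "nat \<Rightarrow> real" where
  "R N = 1 / cf_tail bseq 1 N"

end

theory Submission
  imports Defs
begin

text \<open>
  Put G(m,p) = integral over [0,1] of exp(-1/x) (1-x)^m / x^p (exp_moment). Integration by
  parts shows that y(2j) = e G(j,2) / j!, y(2j+1) = e G(j,1) / j! (moment_seq) is a positive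
  solution of the recurrence y(k) = y(k+1) + b(k+1) y(k+2) of the continued fraction, with
  y(0) = 1 and y(1) = A. The Casoratian of y and of the backward solution whose ratio is the
  approximant R(N) gives R(N) - A = (-1)^N b(1)...b(N) (y(N) - y(N+1)) / K(N), where K(N) is
  the continuant (cf_tail_frac); y(N) > y(N+1) yields the alternation. Since
  K(N) >= ceiling(N/2)!, the error is at most e G(floor(N/2), 2), which tends to 0 by
  dominated convergence.
\<close>

lemma filterlim_div_2_sequentially: "filterlim (\<lambda>n::nat. n div 2) sequentially sequentially"
  unfolding filterlim_at_top eventually_sequentially
proof
  fix m :: nat
  show "\<exists>N. \<forall>n\<ge>N. m \<le> n div 2"
    by (rule exI[of _ "2 * m"]) auto
qed

definition exp_moment :: "nat \<Rightarrow> nat \<Rightarrow> real" where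
  "exp_moment m p = integral {0..1} (\<lambda>x. exp (- 1 / x) * (1 - x) ^ m / x ^ p)"

lemma tendsto_exp_inverse_div_power:
  "((\<lambda>x::real. exp (- 1 / x) / x ^ p) \<longlongrightarrow> 0) (at_right 0)"
proof -
  have "((\<lambda>x::real. inverse x ^ p / exp (inverse x)) \<longlongrightarrow> 0) (at_right 0)"
    by (rule filterlim_compose[OF tendsto_power_div_exp_0 filterlim_inverse_at_top_right])
  then show ?thesis
    by (simp add: exp_minus field_simps)
qed

lemma continuous_on_exp_moment_integrand:
  assumes "0 < p"
  shows "continuous_on {0..1} (\<lambda>x::real. exp (- 1 / x) * (1 - x) ^ m / x ^ p)"
  unfolding continuous_on_eq_continuous_within
proof
  fix x :: real assume "x \<in> {0..1}"
  show "continuous (at x within {0..1}) (\<lambda>x. exp (- 1 / x) * (1 - x) ^ m / x ^ p)"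
  proof (cases "x = 0")
    case True
    have "((\<lambda>x::real. exp (- 1 / x) / x ^ p * (1 - x) ^ m) \<longlongrightarrow> 0 * (1 - 0) ^ m) (at_right 0)"
      by (intro tendsto_mult tendsto_exp_inverse_div_power tendsto_intros)
    then show ?thesis
      using True assms by (simp add: continuous_within at_within_Icc_at_right zero_power field_simps)
  next
    case False
    then show ?thesis by (intro continuous_intros) auto
  qed
qed

lemma exp_moment_integrable:
  "0 < p \<Longrightarrow> (\<lambda>x::real. exp (- 1 / x) * (1 - x) ^ m / x ^ p) integrable_on {0..1}"
  by (intro integrable_continuous_interval continuous_on_exp_moment_integrand)

lemma exp_moment_pos:
  assumes "0 < p"
  shows "exp_moment m p > 0"
proof -
  let ?f = "\<lambda>x::real. exp (- 1 / x) * (1 - x) ^ m / x ^ p"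
  have nonneg: "\<forall>x\<in>{0..1}. 0 \<le> ?f x" by auto
  have "integral {0..1} ?f \<noteq> 0"
  proof
    assume "integral {0..1} ?f = 0"
    then have "\<forall>x\<in>{0..1}. ?f x = 0"
      using integral_eq_0_iff[of 0 1 ?f] continuous_on_exp_moment_integrand[OF assms] nonneg by simp
    then have "?f (1/2) = 0" by (rule bspec) auto
    then show False by simp
  qed
  moreover have "integral {0..1} ?f \<ge> 0"
    using nonneg by (intro integral_nonneg exp_moment_integrable assms) auto
  ultimately show ?thesis unfolding exp_moment_def by linarith
qed

lemma exp_moment_Suc_power:
  assumes "0 < p"
  shows "exp_moment m (Suc p) = exp_moment m p + exp_moment (Suc m) (Suc p)"
proof -
  have "exp_moment m p + exp_moment (Suc m) (Suc p) =
    integral {0..1} (\<lambda>x. exp (- 1 / x) * (1 - x) ^ m / x ^ p + exp (- 1 / x) * (1 - x) ^ Suc m / x ^ Suc p)"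
    unfolding exp_moment_def using assms by (intro integral_add[symmetric] exp_moment_integrable) auto
  also have "\<dots> = exp_moment m (Suc p)"
    unfolding exp_moment_def
  proof (rule integral_cong)
    fix x :: real
    show "exp (- 1 / x) * (1 - x) ^ m / x ^ p + exp (- 1 / x) * (1 - x) ^ Suc m / x ^ Suc p
        = exp (- 1 / x) * (1 - x) ^ m / x ^ Suc p"
      using assms by (cases "x = 0") (auto simp: zero_power field_simps)
  qed
  finally show ?thesis by simp
qed

lemma has_integral_derivative_exp_inverse:
  "((\<lambda>x. exp (- 1 / x) * (1 - x) ^ m / x ^ 2 - real m * exp (- 1 / x) * (1 - x) ^ (m - 1))
     has_integral exp (- 1) * 0 ^ m) {0..1}"
proof -
  \<comment> \<open>the continuous extension of exp(-1/x) (1-x)^m by 0 at x = 0, using x / 0 = 0\<close>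
  define F where "F x = x * (exp (- 1 / x) * (1 - x) ^ m / x ^ 1)" for x :: real
  have "continuous_on {0..1} F"
    unfolding F_def by (intro continuous_intros continuous_on_exp_moment_integrand) simp
  moreover have "(F has_vector_derivative
      exp (- 1 / x) * (1 - x) ^ m / x ^ 2 - real m * exp (- 1 / x) * (1 - x) ^ (m - 1)) (at x)"
    if "x \<in> {0<..<1}" for x
  proof -
    have "((\<lambda>x. exp (- 1 / x) * (1 - x) ^ m) has_real_derivative
        exp (- 1 / x) * (1 - x) ^ m / x ^ 2 - real m * exp (- 1 / x) * (1 - x) ^ (m - 1)) (at x)"
      using that by (auto intro!: derivative_eq_intros simp: field_simps power2_eq_square)
    then have "(F has_real_derivative
        exp (- 1 / x) * (1 - x) ^ m / x ^ 2 - real m * exp (- 1 / x) * (1 - x) ^ (m - 1)) (at x)"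
      by (rule has_field_derivative_transform_within_open[where S = "{0<..}"])
        (use that in \<open>auto simp: F_def\<close>)
    then show ?thesis by (simp add: has_real_derivative_iff_has_vector_derivative)
  qed
  ultimately have "((\<lambda>x. exp (- 1 / x) * (1 - x) ^ m / x ^ 2 - real m * exp (- 1 / x) * (1 - x) ^ (m - 1))
     has_integral F 1 - F 0) {0..1}"
    by (intro fundamental_theorem_of_calculus_interior) auto
  then show ?thesis by (simp add: F_def)
qed

lemma exp_moment_0_2: "exp_moment 0 2 = exp (- 1)"
proof -
  have "((\<lambda>x::real. exp (- 1 / x) * (1 - x) ^ 0 / x ^ 2) has_integral exp (- 1)) {0..1}"
    using has_integral_derivative_exp_inverse[of 0]
    by (simp only: of_nat_0 mult_zero_left diff_zero power_0 mult_1_right)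
  then show ?thesis unfolding exp_moment_def by (rule integral_unique)
qed

lemma exp_moment_Suc_2:
  "exp_moment (Suc m) 2 = real (Suc m) * (exp_moment m 1 - exp_moment (Suc m) 1)"
proof -
  let ?g = "\<lambda>m p x::real. exp (- 1 / x) * (1 - x) ^ m / x ^ p"
  have "((\<lambda>x. ?g (Suc m) 2 x - real (Suc m) * (?g m 1 x - ?g (Suc m) 1 x)) has_integral 0) {0..1}"
  proof (rule has_integral_spike[where S = "{0}"])
    show "((\<lambda>x. exp (- 1 / x) * (1 - x) ^ Suc m / x ^ 2
        - real (Suc m) * exp (- 1 / x) * (1 - x) ^ (Suc m - 1)) has_integral 0) {0..1}"
      using has_integral_derivative_exp_inverse[of "Suc m"] by (simp only: power_0_Suc mult_zero_right)
    show "?g (Suc m) 2 x - real (Suc m) * (?g m 1 x - ?g (Suc m) 1 x) =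
        exp (- 1 / x) * (1 - x) ^ Suc m / x ^ 2 - real (Suc m) * exp (- 1 / x) * (1 - x) ^ (Suc m - 1)"
      if "x \<in> {0..1} - {0}" for x
      using that by (auto simp: field_simps)
  qed simp
  then have "0 = integral {0..1} (\<lambda>x. ?g (Suc m) 2 x - real (Suc m) * (?g m 1 x - ?g (Suc m) 1 x))"
    by (simp add: integral_unique)
  also have "\<dots> = integral {0..1} (?g (Suc m) 2)
      - real (Suc m) * (integral {0..1} (?g m 1) - integral {0..1} (?g (Suc m) 1))"
    by (simp only: integral_mult_right integral_diff integrable_diff integrable_on_mult_right
        exp_moment_integrable zero_less_numeral zero_less_one)
  finally show ?thesis by (simp add: exp_moment_def)
qed

lemma exp_moment_tendsto_0:
  assumes "0 < p"
  shows "(\<lambda>m. exp_moment m p) \<longlonglongrightarrow> 0"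
proof -
  have "(\<lambda>m. integral {0..1::real} (\<lambda>x. exp (- 1 / x) * (1 - x) ^ m / x ^ p))
      \<longlonglongrightarrow> integral {0..1} (\<lambda>x::real. 0::real)"
  proof (rule dominated_convergence(2)[where h = "\<lambda>x. exp (- 1 / x) / x ^ p"])
    show "(\<lambda>x::real. exp (- 1 / x) * (1 - x) ^ m / x ^ p) integrable_on {0..1}" for m
      using exp_moment_integrable[OF assms] .
    show "(\<lambda>x::real. exp (- 1 / x) / x ^ p) integrable_on {0..1}"
      using exp_moment_integrable[OF assms, of 0] by simp
    show "norm (exp (- 1 / x) * (1 - x) ^ m / x ^ p) \<le> exp (- 1 / x) / x ^ p"
      if "x \<in> {0..1}" for m and x :: real
      using that by (auto simp: divide_le_cancel mult_le_cancel_left1 power_le_one)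
    show "(\<lambda>m. exp (- 1 / x) * (1 - x) ^ m / x ^ p) \<longlonglongrightarrow> 0" if "x \<in> {0..1}" for x :: real
    proof (cases "x = 0")
      case True then show ?thesis using assms by (simp add: zero_power)
    next
      case False
      with that have "(\<lambda>m. (1 - x) ^ m) \<longlonglongrightarrow> 0" by (intro LIMSEQ_power_zero) auto
      then show ?thesis by (auto intro: tendsto_mult_right_zero tendsto_divide_zero)
    qed
  qed
  then show ?thesis by (simp add: exp_moment_def)
qed

lemma exp_moment_le_Suc_power: "0 < p \<Longrightarrow> exp_moment m p \<le> exp_moment m (Suc p)"
  using exp_moment_Suc_power[of p m] exp_moment_pos[of "Suc p" "Suc m"] by simp

fun cf_tail_frac :: "(nat \<Rightarrow> real) \<Rightarrow> nat \<Rightarrow> nat \<Rightarrow> real \<times> real" where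
  "cf_tail_frac b k 0 = (1, 1)"
| "cf_tail_frac b k (Suc m) = (case cf_tail_frac b (Suc k) m of (p, q) \<Rightarrow> (p + b k * q, p))"

lemma cf_tail_frac_ge_1:
  assumes "\<And>k. 0 \<le> b k"
  shows "1 \<le> fst (cf_tail_frac b k m) \<and> 1 \<le> snd (cf_tail_frac b k m)"
proof (induction m arbitrary: k)
  case (Suc m)
  obtain p q where pq: "cf_tail_frac b (Suc k) m = (p, q)" by fastforce
  with Suc.IH[of "Suc k"] have "1 \<le> p" "1 \<le> q" by auto
  with pq assms[of k] show ?case by (simp add: add_increasing2)
qed simp

lemma cf_tail_eq_frac:
  assumes "\<And>k. 0 \<le> b k"
  shows "cf_tail b k m = fst (cf_tail_frac b k m) / snd (cf_tail_frac b k m)"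
proof (induction m arbitrary: k)
  case (Suc m)
  obtain p q where pq: "cf_tail_frac b (Suc k) m = (p, q)" by fastforce
  with cf_tail_frac_ge_1[of b "Suc k" m] assms have "1 \<le> p" "1 \<le> q" by auto
  have "cf_tail b k (Suc m) = 1 + b k / (p / q)" using Suc.IH[of "Suc k"] pq by simp
  also have "\<dots> = (p + b k * q) / p" using \<open>1 \<le> p\<close> \<open>1 \<le> q\<close> by (simp add: field_simps)
  finally show ?case using pq by simp
qed simp

lemma cf_tail_frac_casoratian:
  assumes rec: "\<And>k. y k = y (Suc k) + b (Suc k) * y (Suc (Suc k))"
    and "cf_tail_frac b (Suc k) m = (p, q)"
  shows "y k * q - y (Suc k) * p
    = (-1) ^ m * (\<Prod>i<m. b (Suc k + i)) * (y (k + m) - y (Suc (k + m)))"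
  using assms(2)
proof (induction m arbitrary: k p q)
  case (Suc m)
  obtain p' q' where pq': "cf_tail_frac b (Suc (Suc k)) m = (p', q')" by fastforce
  with Suc.prems have "p = p' + b (Suc k) * q'" "q = p'" by auto
  then have "y k * q - y (Suc k) * p = - b (Suc k) * (y (Suc k) * q' - y (Suc (Suc k)) * p')"
    using rec[of k] by (simp add: algebra_simps)
  also have "\<dots> = - b (Suc k) * ((-1) ^ m * (\<Prod>i<m. b (Suc (Suc k) + i))
      * (y (Suc k + m) - y (Suc (Suc k + m))))"
    using Suc.IH[OF pq'] by simp
  also have "\<dots> = (-1) ^ Suc m * (\<Prod>i<Suc m. b (Suc k + i)) * (y (k + Suc m) - y (Suc (k + Suc m)))"
    by (simp add: prod.lessThan_Suc_shift del: prod.lessThan_Suc)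
  finally show ?case .
qed simp

lemma inverse_cf_tail_minus_ratio:
  assumes "\<And>k. 0 \<le> b k"
    and "\<And>k. y k = y (Suc k) + b (Suc k) * y (Suc (Suc k))"
    and "y 0 \<noteq> 0"
  shows "1 / cf_tail b 1 N - y 1 / y 0
    = (-1) ^ N * (\<Prod>i<N. b (Suc i)) * (y N - y (Suc N)) / (y 0 * fst (cf_tail_frac b 1 N))"
proof -
  obtain p q where pq: "cf_tail_frac b 1 N = (p, q)" by fastforce
  with cf_tail_frac_ge_1[of b 1 N] assms(1) have "1 \<le> p" "1 \<le> q" by auto
  have "cf_tail b 1 N = p / q"
    using cf_tail_eq_frac[of b 1 N] assms(1) pq by simp
  then have "1 / cf_tail b 1 N - y 1 / y 0 = (y 0 * q - y 1 * p) / (y 0 * p)"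
    using \<open>1 \<le> p\<close> assms(3) by (simp add: field_simps)
  also have "y 0 * q - y 1 * p = (-1) ^ N * (\<Prod>i<N. b (Suc i)) * (y N - y (Suc N))"
    using cf_tail_frac_casoratian[of y b 0 N p q, OF assms(2)] pq by simp
  finally show ?thesis using pq by simp
qed

lemma cf_tail_frac_num_ge_prod:
  assumes "\<And>k. 0 \<le> b k"
  shows "(\<Prod>i<j. b (k + 2 * i)) * fst (cf_tail_frac b (k + 2 * j) r)
    \<le> fst (cf_tail_frac b k (2 * j + r))"
proof (induction j arbitrary: k)
  case (Suc j)
  obtain p q where pq: "cf_tail_frac b (Suc (Suc k)) (2 * j + r) = (p, q)" by fastforce
  with cf_tail_frac_ge_1[of b "Suc (Suc k)" "2 * j + r"] assms have "1 \<le> p" "1 \<le> q" by auto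
  have "(\<Prod>i<Suc j. b (k + 2 * i)) * fst (cf_tail_frac b (k + 2 * Suc j) r)
      = b k * ((\<Prod>i<j. b (Suc (Suc k) + 2 * i)) * fst (cf_tail_frac b (Suc (Suc k) + 2 * j) r))"
    by (simp add: prod.lessThan_Suc_shift mult.assoc del: prod.lessThan_Suc)
  also have "\<dots> \<le> b k * fst (cf_tail_frac b (Suc (Suc k)) (2 * j + r))"
    using Suc.IH assms[of k] by (rule mult_left_mono)
  also have "\<dots> \<le> fst (cf_tail_frac b k (2 * Suc j + r))"
    using pq \<open>1 \<le> p\<close> \<open>1 \<le> q\<close> assms[of k] assms[of "Suc k"] by (auto intro: add_increasing)
  finally show ?case .
qed simp

lemma bseq_nonneg: "0 \<le> bseq k"
  by (simp add: bseq_def)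

lemma bseq_Suc: "bseq (Suc k) = real (Suc (k div 2))"
  by (simp add: bseq_def)

lemma prod_bseq: "(\<Prod>i<N. bseq (Suc i)) = fact (N div 2) * fact (Suc N div 2)"
proof (induction N)
  case (Suc N)
  have "(\<Prod>i<Suc N. bseq (Suc i)) = fact (Suc N div 2) * (fact (N div 2) * bseq (Suc N))"
    using Suc by (simp add: mult_ac)
  also have "fact (N div 2) * bseq (Suc N) = (fact (Suc (Suc N) div 2) :: real)"
    by (simp add: bseq_Suc fact_Suc mult.commute del: of_nat_Suc)
  finally show ?case .
qed simp

lemma fact_le_cf_tail_frac_bseq: "fact (Suc N div 2) \<le> fst (cf_tail_frac bseq 1 N)"
proof -
  define j r where "j = N div 2" and "r = N mod 2"
  then have N: "N = 2 * j + r" and r: "r < 2" by simp_all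
  have "(\<Prod>i<j. bseq (1 + 2 * i)) = fact j"
    by (induction j) (simp_all add: bseq_Suc fact_Suc del: of_nat_Suc)
  then have "fact j * fst (cf_tail_frac bseq (1 + 2 * j) r) \<le> fst (cf_tail_frac bseq 1 N)"
    using cf_tail_frac_num_ge_prod[of bseq 1 j r] bseq_nonneg N by simp
  moreover have "fact (Suc N div 2) \<le> fact j * fst (cf_tail_frac bseq (1 + 2 * j) r)"
  proof (cases "r = 0")
    case False
    with r have "r = 1" by simp
    then show ?thesis
      using N by (simp add: bseq_Suc fact_Suc del: of_nat_Suc)
  qed (use N in simp)
  ultimately show ?thesis by linarith
qed

definition moment_seq :: "nat \<Rightarrow> real" where
  "moment_seq k = exp 1 * exp_moment (k div 2) (2 - k mod 2) / fact (k div 2)"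

lemma moment_seq_even: "moment_seq (2 * j) = exp 1 * exp_moment j 2 / fact j"
  by (simp add: moment_seq_def)

lemma moment_seq_odd: "moment_seq (Suc (2 * j)) = exp 1 * exp_moment j 1 / fact j"
  by (simp add: moment_seq_def)

lemma moment_seq_pos: "0 < moment_seq k"
  by (simp add: moment_seq_def exp_moment_pos)

lemma moment_seq_0: "moment_seq 0 = 1"
  by (simp add: moment_seq_def exp_moment_0_2 exp_minus)

lemma moment_seq_1: "moment_seq 1 = A_const"
  by (simp add: moment_seq_def exp_moment_def A_const_def)

lemma Suc_mult_div_fact_Suc:
  fixes x :: "'a :: field_char_0"
  shows "of_nat (Suc j) * (x / fact (Suc j)) = x / fact j"
  by (simp add: fact_Suc del: of_nat_Suc)

lemma moment_seq_recurrence: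
  "moment_seq k = moment_seq (Suc k) + bseq (Suc k) * moment_seq (Suc (Suc k))"
proof (cases "even k")
  case True
  then obtain j where k: "k = 2 * j" by blast
  have "moment_seq (Suc k) + bseq (Suc k) * moment_seq (Suc (Suc k))
      = exp 1 * exp_moment j 1 / fact j + exp 1 * exp_moment (Suc j) 2 / fact j"
    using moment_seq_even[of "Suc j"] by (simp add: k moment_seq_odd bseq_def Suc_mult_div_fact_Suc)
  also have "\<dots> = exp 1 * exp_moment j 2 / fact j"
    using exp_moment_Suc_power[of 1 j]
    by (simp add: numeral_2_eq_2 add_divide_distrib[symmetric] algebra_simps)
  also have "\<dots> = moment_seq k"
    by (simp add: k moment_seq_even)
  finally show ?thesis ..
next
  case False
  then obtain j where k: "k = Suc (2 * j)" by (auto elim!: oddE)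
  have "moment_seq (Suc k) + bseq (Suc k) * moment_seq (Suc (Suc k))
      = exp 1 * exp_moment (Suc j) 2 / fact (Suc j) + exp 1 * exp_moment (Suc j) 1 / fact j"
    using moment_seq_even[of "Suc j"] moment_seq_odd[of "Suc j"]
    by (simp add: k bseq_def Suc_mult_div_fact_Suc)
  also have "exp 1 * exp_moment (Suc j) 2 / fact (Suc j)
      = real (Suc j) * (exp 1 * (exp_moment j 1 - exp_moment (Suc j) 1) / fact (Suc j))"
    by (simp add: exp_moment_Suc_2 del: of_nat_Suc)
  also have "\<dots> = exp 1 * (exp_moment j 1 - exp_moment (Suc j) 1) / fact j"
    by (rule Suc_mult_div_fact_Suc)
  also have "\<dots> + exp 1 * exp_moment (Suc j) 1 / fact j = moment_seq k"
    unfolding k moment_seq_odd by (simp add: diff_divide_distrib algebra_simps)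
  finally show ?thesis ..
qed

lemma moment_seq_diff_pos: "0 < moment_seq N - moment_seq (Suc N)"
  using moment_seq_recurrence[of N] moment_seq_pos[of "Suc (Suc N)"] by (simp add: bseq_Suc)

definition R_error :: "nat \<Rightarrow> real" where
  "R_error N = (\<Prod>i<N. bseq (Suc i)) * (moment_seq N - moment_seq (Suc N))
    / fst (cf_tail_frac bseq 1 N)"

lemma R_eq_A_const_plus_error: "R N = A_const + (-1) ^ N * R_error N"
proof -
  have "1 / cf_tail bseq 1 N - A_const = (-1) ^ N * R_error N"
    using inverse_cf_tail_minus_ratio[of bseq moment_seq N, OF bseq_nonneg moment_seq_recurrence]
    unfolding moment_seq_0 moment_seq_1 R_error_def by simp
  then show ?thesis by (simp add: R_def)
qed

lemma R_error_pos: "0 < R_error N"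
  using moment_seq_diff_pos[of N] cf_tail_frac_ge_1[of bseq 1 N, OF bseq_nonneg]
  by (simp add: R_error_def prod_bseq)

lemma R_error_le: "R_error N \<le> exp 1 * exp_moment (N div 2) 2"
proof -
  have frac: "fact (Suc N div 2) / fst (cf_tail_frac bseq 1 N) \<le> 1"
    using fact_le_cf_tail_frac_bseq[of N] cf_tail_frac_ge_1[of bseq 1 N, OF bseq_nonneg]
    by (simp add: divide_le_eq_1)
  have "R_error N = fact (N div 2) * (moment_seq N - moment_seq (Suc N))
      * (fact (Suc N div 2) / fst (cf_tail_frac bseq 1 N))"
    by (simp add: R_error_def prod_bseq)
  also have "\<dots> \<le> fact (N div 2) * (moment_seq N - moment_seq (Suc N))"
    using frac moment_seq_diff_pos[of N] by (intro mult_left_le) simp_all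
  also have "\<dots> \<le> fact (N div 2) * moment_seq N"
    using moment_seq_pos[of "Suc N"] by simp
  also have "\<dots> = exp 1 * exp_moment (N div 2) (2 - N mod 2)"
    by (simp add: moment_seq_def)
  also have "\<dots> \<le> exp 1 * exp_moment (N div 2) 2"
  proof -
    consider "N mod 2 = 0" | "N mod 2 = 1" by arith
    then show ?thesis using exp_moment_le_Suc_power[of 1 "N div 2"] by cases (simp_all add: numeral_2_eq_2)
  qed
  finally show ?thesis .
qed

theorem mainTheorem4:
  shows "R \<longlonglongrightarrow> A_const
    \<and> (\<forall>N. even N \<longrightarrow> R N > A_const)
    \<and> (\<forall>N. odd N \<longrightarrow> R N < A_const)"
proof (intro conjI allI impI)
  have "(\<lambda>N. exp 1 * exp_moment (N div 2) 2) \<longlonglongrightarrow> 0"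
    by (intro tendsto_mult_right_zero filterlim_compose[OF exp_moment_tendsto_0 filterlim_div_2_sequentially])
      simp
  then have "(\<lambda>N. R N - A_const) \<longlonglongrightarrow> 0"
    by (rule Lim_null_comparison[rotated])
      (simp add: R_eq_A_const_plus_error abs_mult R_error_le less_imp_le[OF R_error_pos])
  then show "R \<longlonglongrightarrow> A_const"
    by (simp add: LIM_zero_iff)
next
  fix N :: nat
  show "even N \<Longrightarrow> R N > A_const" "odd N \<Longrightarrow> R N < A_const"
    using R_error_pos[of N] by (simp_all add: R_eq_A_const_plus_error)
qed

end
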